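(* Let $n \ge m \ge 2$ and let $K_{n,m}$ be the complete bipartite graph with bipartition $(X,Y)$, $|X|=n$, $|Y|=m$. If $U$ is a strong edge geodetic set of $K_{n,m}$, then $X \subseteq U$ or $Y \subseteq U$.
   Context: All graphs are finite, simple and connected. A set $S \subseteq V(G)$ is a strong edge geodetic set of $G$ if one can assign to every unordered pair $\{u,v\}$ of distinct vertices of $S$ either one shortest $u,v$-path $P_{uv}$ in $G$ or no path, in such a way that every edge of $G$ lies on at least one of the assigned paths. *)

theory Defs
  imports Main
begin

text \<open>A graph is given by a vertex set V and an adjacency relation E
 (assumed symmetric and irreflexive where relevant).
 A walk is a nonempty list of vertices with consecutive vertices adjacent;
 its length is the number of edges, i.e. length minus one.\<close>

definition is_walk :: "'a set \<Rightarrow> ('a \<Rightarrow> 'a \<Rightarrow> bool) \<Rightarrow> 'a \<Rightarrow> 'a \<Rightarrow> 'a list \<Rightarrow> bool" where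
  "is_walk V E u v p \<longleftrightarrow> p \<noteq> [] \<and> hd p = u \<and> last p = v \<and> set p \<subseteq> V \<and>
     (\<forall>i. Suc i < length p \<longrightarrow> E (p ! i) (p ! Suc i))"

definition gdist :: "'a set \<Rightarrow> ('a \<Rightarrow> 'a \<Rightarrow> bool) \<Rightarrow> 'a \<Rightarrow> 'a \<Rightarrow> nat" where
  "gdist V E u v = (LEAST k. \<exists>p. is_walk V E u v p \<and> length p = Suc k)"

definition is_shortest_path :: "'a set \<Rightarrow> ('a \<Rightarrow> 'a \<Rightarrow> bool) \<Rightarrow> 'a \<Rightarrow> 'a \<Rightarrow> 'a list \<Rightarrow> bool" where
  "is_shortest_path V E u v p \<longleftrightarrow> is_walk V E u v p \<and> distinct p \<and>
     length p = Suc (gdist V E u v)"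

definition edge_on :: "'a \<Rightarrow> 'a \<Rightarrow> 'a list \<Rightarrow> bool" where
  "edge_on x y p \<longleftrightarrow> (\<exists>i. Suc i < length p \<and> {p ! i, p ! Suc i} = {x, y})"

text \<open>Strong edge geodetic set: an assignment P of at most one shortest path to
 every unordered pair {u,v} of distinct vertices of S (an undirected path, so
 it may be listed from u to v or from v to u) such that every edge lies on some
 assigned path.\<close>
definition strong_edge_geodetic :: "'a set \<Rightarrow> ('a \<Rightarrow> 'a \<Rightarrow> bool) \<Rightarrow> 'a set \<Rightarrow> bool" where
  "strong_edge_geodetic V E S \<longleftrightarrow> S \<subseteq> V \<and>
    (\<exists>P :: 'a set \<Rightarrow> 'a list option.
       (\<forall>u\<in>S. \<forall>v\<in>S. \<forall>p. u \<noteq> v \<longrightarrow> P {u, v} = Some p \<longrightarrow>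
            is_shortest_path V E u v p \<or> is_shortest_path V E v u p) \<and>
       (\<forall>x\<in>V. \<forall>y\<in>V. E x y \<longrightarrow>
            (\<exists>u\<in>S. \<exists>v\<in>S. \<exists>p. u \<noteq> v \<and> P {u, v} = Some p \<and> edge_on x y p)))"

definition kbip :: "'a set \<Rightarrow> 'a set \<Rightarrow> 'a \<Rightarrow> 'a \<Rightarrow> bool" where
  "kbip X Y x y \<longleftrightarrow> (x \<in> X \<and> y \<in> Y) \<or> (x \<in> Y \<and> y \<in> X)"

end

theory Submission
  imports Defs
begin

text \<open>Every pair of vertices of \<open>K\<^sub>n\<^sub>,\<^sub>m\<close> is at distance at most 2, so every shortest path
  has at most three vertices, and an edge of such a path contains one of its endpoints.
  Hence for \<open>x \<in> X - U\<close> and \<open>y \<in> Y - U\<close> the edge \<open>xy\<close> could lie on no assigned path.\<close>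

lemma gdist_le_walk_length:
  assumes "is_walk V E u v p" "length p = Suc k"
  shows "gdist V E u v \<le> k"
  unfolding gdist_def using assms by (intro Least_le) blast

lemma gdist_le_1_if_adjacent:
  assumes "u \<in> V" "v \<in> V" "E u v"
  shows "gdist V E u v \<le> 1"
proof -
  have "is_walk V E u v [u, v]"
    using assms unfolding is_walk_def by (auto simp: less_Suc_eq)
  then show ?thesis by (rule gdist_le_walk_length) simp
qed

lemma gdist_le_2_if_common_neighbour:
  assumes "u \<in> V" "v \<in> V" "w \<in> V" "E u w" "E w v"
  shows "gdist V E u v \<le> 2"
proof -
  have "is_walk V E u v [u, w, v]"
    using assms unfolding is_walk_def by (auto simp: less_Suc_eq nth_Cons split: nat.splits)
  then show ?thesis by (rule gdist_le_walk_length) simp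
qed

lemma gdist_kbip_le_2:
  assumes "x \<in> X" "y \<in> Y" "u \<in> X \<union> Y" "v \<in> X \<union> Y"
  shows "gdist (X \<union> Y) (kbip X Y) u v \<le> 2"
proof -
  consider "u \<in> X" "v \<in> X" | "kbip X Y u v" | "u \<in> Y" "v \<in> Y"
    using assms unfolding kbip_def by blast
  then show ?thesis
  proof cases
    case 1
    then show ?thesis
      using assms by (intro gdist_le_2_if_common_neighbour[where w = y]) (auto simp: kbip_def)
  next
    case 2
    then show ?thesis
      using assms gdist_le_1_if_adjacent[of u "X \<union> Y" v "kbip X Y"] by simp
  next
    case 3
    then show ?thesis
      using assms by (intro gdist_le_2_if_common_neighbour[where w = x]) (auto simp: kbip_def)
  qed
qed

lemma edge_on_short_walk_meets_ends:
  assumes "is_walk V E a b p" "length p \<le> 3" "edge_on x y p"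
  shows "x \<in> {a, b} \<or> y \<in> {a, b}"
proof -
  obtain i where i: "Suc i < length p" "{p ! i, p ! Suc i} = {x, y}"
    using assms(3) unfolding edge_on_def by blast
  have "p \<noteq> []" "hd p = a" "last p = b"
    using assms(1) unfolding is_walk_def by auto
  then have "p ! 0 = a" "p ! (length p - 1) = b"
    by (simp_all add: hd_conv_nth last_conv_nth)
  moreover have "i = 0 \<or> Suc i = length p - 1"
    using i(1) assms(2) by linarith
  ultimately have "a \<in> {x, y} \<or> b \<in> {x, y}"
    using i(2) by (metis insertI1 insertI2)
  then show ?thesis by blast
qed

lemma strong_edge_geodetic_diameter_2_covers_edges:
  assumes "strong_edge_geodetic V E S"
    and diam: "\<And>u v. u \<in> V \<Longrightarrow> v \<in> V \<Longrightarrow> gdist V E u v \<le> 2"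
    and "x \<in> V" "y \<in> V" "E x y"
  shows "x \<in> S \<or> y \<in> S"
proof -
  obtain P where "S \<subseteq> V"
    and shortest: "\<forall>u\<in>S. \<forall>v\<in>S. \<forall>p. u \<noteq> v \<longrightarrow> P {u, v} = Some p \<longrightarrow>
            is_shortest_path V E u v p \<or> is_shortest_path V E v u p"
    and covers: "\<forall>x\<in>V. \<forall>y\<in>V. E x y \<longrightarrow>
            (\<exists>u\<in>S. \<exists>v\<in>S. \<exists>p. u \<noteq> v \<and> P {u, v} = Some p \<and> edge_on x y p)"
    using assms(1) unfolding strong_edge_geodetic_def by blast
  then obtain u v p where uv: "u \<in> S" "v \<in> S" and on: "edge_on x y p"
    and "is_shortest_path V E u v p \<or> is_shortest_path V E v u p"
    using assms(3-5) by metis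
  then obtain a b where ab: "{a, b} = {u, v}" and "is_shortest_path V E a b p"
    by blast
  moreover have "a \<in> V" "b \<in> V"
    using ab uv \<open>S \<subseteq> V\<close> by (auto simp: doubleton_eq_iff)
  ultimately have "is_walk V E a b p" "length p \<le> 3"
    using diam[of a b] unfolding is_shortest_path_def by auto
  then have "x \<in> {a, b} \<or> y \<in> {a, b}"
    using on by (rule edge_on_short_walk_meets_ends)
  then show ?thesis
    using ab uv by auto
qed

theorem mainTheorem2:
  fixes X Y U :: "'a set" and n m :: nat
  assumes "2 \<le> m" and "m \<le> n"
    and "finite X" and "finite Y" and "card X = n" and "card Y = m"
    and "X \<inter> Y = {}"
    and "strong_edge_geodetic (X \<union> Y) (kbip X Y) U"
  shows "X \<subseteq> U \<or> Y \<subseteq> U"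
proof (rule ccontr)
  assume "\<not> ?thesis"
  then obtain x y where x: "x \<in> X" "x \<notin> U" and y: "y \<in> Y" "y \<notin> U"
    by blast
  have "x \<in> U \<or> y \<in> U"
  proof (rule strong_edge_geodetic_diameter_2_covers_edges[OF assms(8)])
    show "\<And>u v. u \<in> X \<union> Y \<Longrightarrow> v \<in> X \<union> Y \<Longrightarrow> gdist (X \<union> Y) (kbip X Y) u v \<le> 2"
      using gdist_kbip_le_2[OF x(1) y(1)] .
    show "kbip X Y x y"
      using x y unfolding kbip_def by blast
  qed (use x y in auto)
  with x y show False by blast
qed

end
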